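(* $\bm M\succeq\bm 0$, $\bm M_K\succeq\bm 0$, $\bm H\succ\bm 0$ and $\bm H_K\succ\bm 0$.
   Context: Let $\bm X=(\bm X_1,\dots,\bm X_K)\in\mathbb R^{n\times p}$ with $\bm X_i\in\mathbb R^{n\times p_i}$, $\bm A=\bm X^\top\bm X=(\bm A_1,\dots,\bm A_K)$, $\bm A_i=\bm X^\top\bm X_i$, and $\mu>0$. Let $\bm S=\eta\bm I_p-\mu\bm A^\top\bm A$ with $\eta$ larger than the largest eigenvalue of $\mu\bm A^\top\bm A$, and $\bm S_i'=\eta_i\bm I_{p_i}-\mu\bm A_i^\top\bm A_i$ with $\eta_i$ larger than the largest eigenvalue of $\mu\bm A_i^\top\bm A_i$. Define $\bm M=\begin{pmatrix}\mu\bm A^\top\bm A&\bm 0&\bm A^\top\\\bm 0&\mu\bm I_p&-\bm I_p\\\bm A&-\bm I_p&\frac{2}{\mu}\bm I_p\end{pmatrix}$, $\bm H=\begin{pmatrix}\mu\bm A^\top\bm A+\bm S&\bm 0&\bm A^\top\\\bm 0&\mu\bm I_p&-\bm I_p\\\bm A&-\bm I_p&\frac{2}{\mu}\bm I_p\end{pmatrix}$, $\bm M_K=\begin{pmatrix}\bm\Lambda_K&\bm G^\top\\\bm G&\frac{K+1}{\mu}\bm I_p\end{pmatrix}$, $\bm H_K=\begin{pmatrix}\tilde{\bm\Lambda}_K&\bm G^\top\\\bm G&\frac{K+1}{\mu}\bm I_p\end{pmatrix}$, where $\bm G=(\bm A_1,\dots,\bm A_K,-\bm I_p)$, $\bm\Lambda_K=\mathrm{diag}(\mu\bm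 A_1^\top\bm A_1,\dots,\mu\bm A_K^\top\bm A_K,\mu\bm I_p)$, $\tilde{\bm\Lambda}_K=\mathrm{diag}(\mu\bm A_1^\top\bm A_1+\bm S_1',\dots,\mu\bm A_K^\top\bm A_K+\bm S_K',\mu\bm I_p)=\mathrm{diag}(\eta_1\bm I_{p_1},\dots,\eta_K\bm I_{p_K},\mu\bm I_p)$. $\succeq\bm 0$ means positive semidefinite, $\succ\bm 0$ positive definite. *)

theory Defs
  imports "Jordan_Normal_Form.Jordan_Normal_Form"
begin

fun hcat :: "nat \<Rightarrow> 'a :: zero mat list \<Rightarrow> 'a mat" where
  "hcat n [] = 0\<^sub>m n 0"
| "hcat n (X # Xs) = four_block_mat X (hcat n Xs) (0\<^sub>m 0 (dim_col X)) (0\<^sub>m 0 (dim_col (hcat n Xs)))"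

definition vcat2 :: "'a :: zero mat \<Rightarrow> 'a mat \<Rightarrow> 'a mat" where
  "vcat2 A B = four_block_mat A (0\<^sub>m (dim_row A) 0) B (0\<^sub>m (dim_row B) 0)"

definition hcat2 :: "'a :: zero mat \<Rightarrow> 'a mat \<Rightarrow> 'a mat" where
  "hcat2 A B = four_block_mat A B (0\<^sub>m 0 (dim_col A)) (0\<^sub>m 0 (dim_col B))"

text \<open>3 x 3 block matrix [[a,b,c],[d,e,f],[g,h,i]].\<close>
definition block3 :: "'a :: zero mat \<Rightarrow> 'a mat \<Rightarrow> 'a mat \<Rightarrow> 'a mat \<Rightarrow> 'a mat \<Rightarrow> 'a mat
    \<Rightarrow> 'a mat \<Rightarrow> 'a mat \<Rightarrow> 'a mat \<Rightarrow> 'a mat" where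
  "block3 a b c d e f g h i =
     four_block_mat (four_block_mat a b d e) (vcat2 c f) (hcat2 g h) i"

definition psd :: "real mat \<Rightarrow> bool" where
  "psd A \<longleftrightarrow> A \<in> carrier_mat (dim_row A) (dim_row A) \<and> A\<^sup>T = A \<and>
     (\<forall>x \<in> carrier_vec (dim_row A). x \<bullet> (A *\<^sub>v x) \<ge> 0)"

definition pd :: "real mat \<Rightarrow> bool" where
  "pd A \<longleftrightarrow> A \<in> carrier_mat (dim_row A) (dim_row A) \<and> A\<^sup>T = A \<and>
     (\<forall>x \<in> carrier_vec (dim_row A). x \<noteq> 0\<^sub>v (dim_row A) \<longrightarrow> x \<bullet> (A *\<^sub>v x) > 0)"

text \<open>X = (X_1,...,X_K) with each X_i having n rows; p = total number of columns.\<close>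
definition Xmat :: "nat \<Rightarrow> real mat list \<Rightarrow> real mat" where
  "Xmat n Xs = hcat n Xs"

definition pdim :: "nat \<Rightarrow> real mat list \<Rightarrow> nat" where
  "pdim n Xs = dim_col (Xmat n Xs)"

definition Amat :: "nat \<Rightarrow> real mat list \<Rightarrow> real mat" where
  "Amat n Xs = (Xmat n Xs)\<^sup>T * Xmat n Xs"

definition Ablocks :: "nat \<Rightarrow> real mat list \<Rightarrow> real mat list" where
  "Ablocks n Xs = map (\<lambda>Xi. (Xmat n Xs)\<^sup>T * Xi) Xs"

definition Smat :: "nat \<Rightarrow> real mat list \<Rightarrow> real \<Rightarrow> real \<Rightarrow> real mat" where
  "Smat n Xs \<mu> \<eta> = \<eta> \<cdot>\<^sub>m 1\<^sub>m (pdim n Xs) - \<mu> \<cdot>\<^sub>m ((Amat n Xs)\<^sup>T * Amat n Xs)"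

definition Mmat :: "nat \<Rightarrow> real mat list \<Rightarrow> real \<Rightarrow> real mat" where
  "Mmat n Xs \<mu> = (let p = pdim n Xs; A = Amat n Xs in
     block3 (\<mu> \<cdot>\<^sub>m (A\<^sup>T * A)) (0\<^sub>m p p) (A\<^sup>T)
            (0\<^sub>m p p) (\<mu> \<cdot>\<^sub>m 1\<^sub>m p) (- 1\<^sub>m p)
            A (- 1\<^sub>m p) ((2 / \<mu>) \<cdot>\<^sub>m 1\<^sub>m p))"

definition Hmat :: "nat \<Rightarrow> real mat list \<Rightarrow> real \<Rightarrow> real \<Rightarrow> real mat" where
  "Hmat n Xs \<mu> \<eta> = (let p = pdim n Xs; A = Amat n Xs in
     block3 (\<mu> \<cdot>\<^sub>m (A\<^sup>T * A) + Smat n Xs \<mu> \<eta>) (0\<^sub>m p p) (A\<^sup>T)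
            (0\<^sub>m p p) (\<mu> \<cdot>\<^sub>m 1\<^sub>m p) (- 1\<^sub>m p)
            A (- 1\<^sub>m p) ((2 / \<mu>) \<cdot>\<^sub>m 1\<^sub>m p))"

definition Gmat :: "nat \<Rightarrow> real mat list \<Rightarrow> real mat" where
  "Gmat n Xs = hcat (pdim n Xs) (Ablocks n Xs @ [- 1\<^sub>m (pdim n Xs)])"

definition Sblock :: "real \<Rightarrow> real \<Rightarrow> real mat \<Rightarrow> real mat" where
  "Sblock \<mu> \<eta>i Ai = \<eta>i \<cdot>\<^sub>m 1\<^sub>m (dim_col Ai) - \<mu> \<cdot>\<^sub>m (Ai\<^sup>T * Ai)"

definition LambdaK :: "nat \<Rightarrow> real mat list \<Rightarrow> real \<Rightarrow> real mat" where
  "LambdaK n Xs \<mu> = diag_block_mat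
     (map (\<lambda>Ai. \<mu> \<cdot>\<^sub>m (Ai\<^sup>T * Ai)) (Ablocks n Xs) @ [\<mu> \<cdot>\<^sub>m 1\<^sub>m (pdim n Xs)])"

definition LambdaK_tilde :: "nat \<Rightarrow> real mat list \<Rightarrow> real \<Rightarrow> real list \<Rightarrow> real mat" where
  "LambdaK_tilde n Xs \<mu> \<eta>s = diag_block_mat
     (map (\<lambda>(Ai, \<eta>i). \<mu> \<cdot>\<^sub>m (Ai\<^sup>T * Ai) + Sblock \<mu> \<eta>i Ai) (zip (Ablocks n Xs) \<eta>s)
      @ [\<mu> \<cdot>\<^sub>m 1\<^sub>m (pdim n Xs)])"

definition MKmat :: "nat \<Rightarrow> real mat list \<Rightarrow> real \<Rightarrow> real mat" where
  "MKmat n Xs \<mu> = (let G = Gmat n Xs; K = length Xs; p = pdim n Xs in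
     four_block_mat (LambdaK n Xs \<mu>) (G\<^sup>T) G ((real (K + 1) / \<mu>) \<cdot>\<^sub>m 1\<^sub>m p))"

definition HKmat :: "nat \<Rightarrow> real mat list \<Rightarrow> real \<Rightarrow> real list \<Rightarrow> real mat" where
  "HKmat n Xs \<mu> \<eta>s = (let G = Gmat n Xs; K = length Xs; p = pdim n Xs in
     four_block_mat (LambdaK_tilde n Xs \<mu> \<eta>s) (G\<^sup>T) G ((real (K + 1) / \<mu>) \<cdot>\<^sub>m 1\<^sub>m p))"

end

theory Submission
  imports Defs "Jordan_Normal_Form.Spectral_Radius"
begin

text \<open>
  Each of the four matrices is an arrowhead matrix [diag(L_1, ..., L_m), G^T; G, (m/\<mu>) I]
  with G = (G_1, ..., G_m): for M and H the blocks (L_i, G_i) are (L, A) and (\<mu> I, -I), where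
  L = \<mu> A^T A resp. L = \<mu> A^T A + S = \<eta> I; for M_K and H_K they are (L_i, A_i), i = 1..K,
  and (\<mu> I, -I). Distributing the corner (m/\<mu>) I evenly over the blocks, the quadratic form
  at (w_1, ..., w_m, z) is the sum of the forms of the saddle-point matrices
  [L_i, G_i^T; G_i, I/\<mu>] at (w_i, z), and completing the square gives
  w^T L w + 2 z^T G w + |z|^2/\<mu> = w^T (L - \<mu> G^T G) w + |\<mu> G w + z|^2/\<mu>.
  For L = \<mu> G^T G every summand is nonnegative, so M and M_K are positive semidefinite.
  For L = \<eta> I the matrix \<eta> I - \<mu> G^T G is positive definite, because \<eta> exceeds every
  eigenvalue of the symmetric matrix \<mu> G^T G (the spectral theorem, proved by deflating a
  real eigenvector), so such a summand vanishes only at w = 0, z = 0. The block (\<mu> I, -I)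
  contributes \<mu> |w|^2 at z = 0; hence H and H_K are positive definite.
\<close>

lemma quadratic_form_four_block_mat:
  fixes A :: "'a :: comm_ring mat"
  assumes A: "A \<in> carrier_mat n1 n1" and B: "B \<in> carrier_mat n1 n2"
    and C: "C \<in> carrier_mat n2 n1" and D: "D \<in> carrier_mat n2 n2"
    and a: "a \<in> carrier_vec n1" and d: "d \<in> carrier_vec n2"
  shows "(a @\<^sub>v d) \<bullet> (four_block_mat A B C D *\<^sub>v (a @\<^sub>v d)) =
     a \<bullet> (A *\<^sub>v a) + a \<bullet> (B *\<^sub>v d) + d \<bullet> (C *\<^sub>v a) + d \<bullet> (D *\<^sub>v d)"
proof -
  have "(a @\<^sub>v d) \<bullet> (four_block_mat A B C D *\<^sub>v (a @\<^sub>v d)) =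
     a \<bullet> (A *\<^sub>v a + B *\<^sub>v d) + d \<bullet> (C *\<^sub>v a + D *\<^sub>v d)"
    using assms by (simp add: four_block_mat_mult_vec scalar_prod_append[of _ n1 _ n2])
  also have "\<dots> = a \<bullet> (A *\<^sub>v a) + a \<bullet> (B *\<^sub>v d) + (d \<bullet> (C *\<^sub>v a) + d \<bullet> (D *\<^sub>v d))"
    using assms by (simp add: scalar_prod_add_distrib[of _ n1] scalar_prod_add_distrib[of _ n2])
  finally show ?thesis by (simp add: ac_simps)
qed

lemma zero_mat_mult_vec[simp]: "v \<in> carrier_vec c \<Longrightarrow> 0\<^sub>m r c *\<^sub>v v = (0\<^sub>v r :: 'a :: semiring_0 vec)"
  by (intro eq_vecI) (auto simp: scalar_prod_def)

lemma append_vec_eq_0_iff: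
  assumes "a \<in> carrier_vec k" "z \<in> carrier_vec p"
  shows "a @\<^sub>v z = 0\<^sub>v (k + p) \<longleftrightarrow> a = 0\<^sub>v k \<and> z = (0\<^sub>v p :: 'a :: zero vec)"
proof -
  have "0\<^sub>v (k + p) = 0\<^sub>v k @\<^sub>v (0\<^sub>v p :: 'a vec)" by (intro eq_vecI) auto
  then show ?thesis using append_vec_eq[OF assms(1) zero_carrier_vec] by simp
qed

lemma real_scalar_prod_self_nonneg: "0 \<le> (v :: real vec) \<bullet> v"
  using conjugate_square_ge_0_vec[of v] by simp

lemma real_scalar_prod_self_eq_0_iff:
  "(v :: real vec) \<in> carrier_vec n \<Longrightarrow> v \<bullet> v = 0 \<longleftrightarrow> v = 0\<^sub>v n"
  using conjugate_square_eq_0_vec[of v n] by simp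

lemma smult_mat_mult_vec:
  "A \<in> carrier_mat nr nc \<Longrightarrow> v \<in> carrier_vec nc \<Longrightarrow> (k \<cdot>\<^sub>m A) *\<^sub>v v = k \<cdot>\<^sub>v (A *\<^sub>v (v :: 'a :: comm_ring vec))"
  by (intro eq_vecI) (auto simp: scalar_prod_def sum_distrib_left ac_simps)

lemma pd_imp_psd:
  assumes "pd A" shows "psd A"
  unfolding psd_def
proof (intro conjI ballI)
  fix x :: "real vec" assume x: "x \<in> carrier_vec (dim_row A)"
  show "0 \<le> x \<bullet> (A *\<^sub>v x)"
  proof (cases "x = 0\<^sub>v (dim_row A)")
    case True
    have "A *\<^sub>v x \<in> carrier_vec (dim_row A)" by (rule carrier_vecI) simp
    then show ?thesis using True by simp
  next
    case False
    then show ?thesis using assms x unfolding pd_def by (simp add: less_imp_le)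
  qed
qed (use assms in \<open>auto simp: pd_def\<close>)

lemma pd_smult_one_mat:
  assumes "(0 :: real) < e" shows "pd (e \<cdot>\<^sub>m 1\<^sub>m k)"
  unfolding pd_def
proof (intro conjI ballI impI)
  fix x :: "real vec" assume x: "x \<in> carrier_vec (dim_row (e \<cdot>\<^sub>m 1\<^sub>m k))" "x \<noteq> 0\<^sub>v (dim_row (e \<cdot>\<^sub>m 1\<^sub>m k))"
  then have "0 < x \<bullet> x" using real_scalar_prod_self_nonneg[of x] real_scalar_prod_self_eq_0_iff[of x k]
    by (simp add: less_le)
  then show "0 < x \<bullet> ((e \<cdot>\<^sub>m 1\<^sub>m k) *\<^sub>v x)"
    using x assms by (simp add: smult_mat_mult_vec[of _ k k])
next
  show "(e \<cdot>\<^sub>m 1\<^sub>m k)\<^sup>T = e \<cdot>\<^sub>m 1\<^sub>m k" by (rule eq_matI) auto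
qed simp

lemma pd_four_block_mat_diag:
  assumes A: "A \<in> carrier_mat k k" "pd A" and D: "D \<in> carrier_mat m m" "pd D"
  shows "pd (four_block_mat A (0\<^sub>m k m) (0\<^sub>m m k) D)" (is "pd ?T")
proof -
  have T: "?T \<in> carrier_mat (k + m) (k + m)" using A D by auto
  have "?T\<^sup>T = ?T"
    using transpose_four_block_mat[OF A(1) zero_carrier_mat zero_carrier_mat D(1)] A D
    unfolding pd_def by auto
  moreover have "0 < x \<bullet> (?T *\<^sub>v x)" if x: "x \<in> carrier_vec (k + m)" "x \<noteq> 0\<^sub>v (k + m)" for x
  proof -
    define a d where "a = vec_first x k" and "d = vec_last x m"
    have a: "a \<in> carrier_vec k" and d: "d \<in> carrier_vec m" and xad: "x = a @\<^sub>v d"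
      using x unfolding a_def d_def by auto
    have qf: "x \<bullet> (?T *\<^sub>v x) = a \<bullet> (A *\<^sub>v a) + d \<bullet> (D *\<^sub>v d)"
      unfolding xad using quadratic_form_four_block_mat[OF A(1) _ _ D(1) a d] a d by simp
    have "a \<noteq> 0\<^sub>v k \<or> d \<noteq> 0\<^sub>v m" using x(2) xad by auto
    then have "0 < a \<bullet> (A *\<^sub>v a) \<or> 0 < d \<bullet> (D *\<^sub>v d)"
      using A D a d unfolding pd_def by auto
    moreover have "0 \<le> a \<bullet> (A *\<^sub>v a)" "0 \<le> d \<bullet> (D *\<^sub>v d)"
      using pd_imp_psd[OF A(2)] pd_imp_psd[OF D(2)] A D a d unfolding psd_def by auto
    ultimately show ?thesis unfolding qf by linarith
  qed
  ultimately show ?thesis using T A D unfolding pd_def by auto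
qed

lemma pd_if_pd_orthogonal_congruence:
  fixes C :: "real mat"
  assumes U: "U \<in> carrier_mat n n" "U * U\<^sup>T = 1\<^sub>m n"
    and C: "C \<in> carrier_mat n n" "C\<^sup>T = C" and pd: "pd (U\<^sup>T * C * U)"
  shows "pd C"
  unfolding pd_def
proof (intro conjI ballI impI)
  fix x :: "real vec" assume x: "x \<in> carrier_vec (dim_row C)" "x \<noteq> 0\<^sub>v (dim_row C)"
  define y where "y = U\<^sup>T *\<^sub>v x"
  have y: "y \<in> carrier_vec n" using U C x unfolding y_def by auto
  have "U *\<^sub>v y = (U * U\<^sup>T) *\<^sub>v x"
    unfolding y_def by (intro assoc_mult_mat_vec[symmetric]) (use U C x in auto)
  then have Uy: "U *\<^sub>v y = x" using U(2) C x by simp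
  have "y \<noteq> 0\<^sub>v n" using Uy x U C by auto
  then have "0 < y \<bullet> ((U\<^sup>T * C * U) *\<^sub>v y)" using pd y U C unfolding pd_def by auto
  also have "(U\<^sup>T * C * U) *\<^sub>v y = U\<^sup>T *\<^sub>v (C *\<^sub>v x)"
    using U C y by (simp add: assoc_mult_mat_vec[of _ n n _ n] flip: Uy)
  also have "y \<bullet> \<dots> = x \<bullet> (C *\<^sub>v x)"
    using transpose_vec_mult_scalar[of "U\<^sup>T" n n "C *\<^sub>v x" y] U C y x by (simp add: Uy)
  finally show "0 < x \<bullet> (C *\<^sub>v x)" .
qed (use C in auto)

section \<open>Symmetric matrices with positive eigenvalues are positive definite\<close>

lemma complex_eigenvalue_of_real_symmetric_mat_is_real:
  fixes B :: "real mat"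
  assumes B: "B \<in> carrier_mat k k" and sym: "B\<^sup>T = B"
    and e: "eigenvalue (map_mat complex_of_real B) e"
  shows "e \<in> \<real>"
proof -
  define Bc where "Bc = map_mat complex_of_real B"
  have Bc: "Bc \<in> carrier_mat k k" using B unfolding Bc_def by simp
  have Bc_sym: "Bc\<^sup>T = Bc"
    unfolding Bc_def by (metis sym map_mat_transpose)
  obtain v where v: "v \<in> carrier_vec k" "v \<noteq> 0\<^sub>v k" and Bv: "Bc *\<^sub>v v = e \<cdot>\<^sub>v v"
    using e Bc unfolding Bc_def[symmetric] eigenvalue_def eigenvector_def by auto
  have Bv_cnj: "Bc *\<^sub>v conjugate v = cnj e \<cdot>\<^sub>v conjugate v"
  proof (rule eq_vecI)
    fix i assume "i < dim_vec (cnj e \<cdot>\<^sub>v conjugate v)"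
    then have i: "i < k" using v by simp
    have "(Bc *\<^sub>v conjugate v) $ i = cnj ((Bc *\<^sub>v v) $ i)"
      using i v B unfolding Bc_def by (simp add: scalar_prod_def row_def)
    then show "(Bc *\<^sub>v conjugate v) $ i = (cnj e \<cdot>\<^sub>v conjugate v) $ i"
      using i v by (simp add: Bv)
  qed (use v Bc in auto)
  have "v \<bullet> (Bc *\<^sub>v conjugate v) = conjugate v \<bullet> (Bc *\<^sub>v v)"
    using transpose_vec_mult_scalar[OF Bc, of "conjugate v" v] v Bc
    by (simp add: Bc_sym comm_scalar_prod[of _ k])
  then have "cnj e * (v \<bullet>c v) = e * (v \<bullet>c v)"
    using v Bc by (simp add: Bv Bv_cnj comm_scalar_prod[of "conjugate v" k v])
  moreover have "v \<bullet>c v \<noteq> 0" using v by simp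
  ultimately show "e \<in> \<real>" by (simp add: Reals_cnj_iff)
qed

lemma real_symmetric_mat_has_eigenvalue:
  fixes B :: "real mat"
  assumes B: "B \<in> carrier_mat k k" and sym: "B\<^sup>T = B" and k: "0 < k"
  obtains e where "eigenvalue B e"
proof -
  have Bc: "map_mat complex_of_real B \<in> carrier_mat k k" using B by simp
  from spectrum_non_empty[OF Bc k] obtain e where e: "eigenvalue (map_mat complex_of_real B) e"
    unfolding spectrum_def by auto
  have "e = of_real (Re e)"
    using complex_eigenvalue_of_real_symmetric_mat_is_real[OF B sym e] by (simp add: complex_is_Real_iff)
  moreover have "poly (char_poly (map_mat complex_of_real B)) e = 0"
    using e eigenvalue_root_char_poly[OF Bc] by simp
  then have "poly (map_poly complex_of_real (char_poly B)) e = 0"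
    by (simp only: of_real_hom.char_poly_hom[OF B])
  ultimately have "poly (char_poly B) (Re e) = 0"
    by (metis of_real_eq_0_iff of_real_hom.poly_map_poly)
  then show thesis using that eigenvalue_root_char_poly[OF B] by blast
qed

lemma orthogonal_mat_with_first_col:
  fixes u :: "real vec"
  assumes u: "u \<in> carrier_vec n" and u1: "u \<bullet> u = 1"
  obtains U where "U \<in> carrier_mat n n" "U\<^sup>T * U = 1\<^sub>m n" "U * U\<^sup>T = 1\<^sub>m n" "col U 0 = u"
proof -
  interpret cof_vec_space n "TYPE(real)" .
  have u0: "u \<noteq> 0\<^sub>v n" using u1 u by auto
  then have n: "0 < n" using u by (cases n) auto
  define ws where "ws = gram_schmidt n (basis_completion u)"
  from basis_completion[OF u u0] gram_schmidt_result[OF _ _ _ ws_def]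
  have ws: "set ws \<subseteq> carrier_vec n" "corthogonal ws" "length ws = n"
    by (auto simp: basis_def)
  obtain vs where "basis_completion u = u # vs" unfolding basis_completion_def Let_def by simp
  then have "hd ws = u" unfolding ws_def using u by simp
  then have "ws ! 0 = u" using hd_conv_nth[of ws] ws(3) n by auto
  define us where "us = map (\<lambda>w. (1 / sqrt (w \<bullet> w)) \<cdot>\<^sub>v w) ws"
  have us: "set us \<subseteq> carrier_vec n" "length us = n" using ws unfolding us_def by auto
  have ws_orth: "ws ! i \<bullet> ws ! j = 0 \<longleftrightarrow> i \<noteq> j" if "i < n" "j < n" for i j
    using corthogonalD[OF ws(2), of i j] ws(3) that by simp
  have ws_pos: "0 < ws ! i \<bullet> ws ! i" if "i < n" for i
    using ws_orth[OF that that] real_scalar_prod_self_nonneg[of "ws ! i"] by linarith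
  have orth: "us ! i \<bullet> us ! j = (if i = j then 1 else 0)" if "i < n" "j < n" for i j
  proof -
    have "ws ! i \<in> carrier_vec n" "ws ! j \<in> carrier_vec n" using ws that by auto
    then show ?thesis
      using ws_orth[OF that] ws_pos[OF that(1)] ws_pos[OF that(2)] that ws(3) unfolding us_def
      by (auto simp: real_sqrt_mult[symmetric] power2_eq_square[symmetric])
  qed
  define U where "U = mat_of_cols n us"
  have U: "U \<in> carrier_mat n n" unfolding U_def using us by auto
  have col: "col U i = us ! i" if "i < n" for i
    unfolding U_def using that us by (auto simp: subset_code(1))
  have UtU: "U\<^sup>T * U = 1\<^sub>m n"
    by (rule eq_matI) (use U col orth in auto)
  show thesis
  proof
    show "U * U\<^sup>T = 1\<^sub>m n" using mat_mult_left_right_inverse[OF _ U UtU] U by auto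
    show "col U 0 = u" using col[OF n] \<open>ws ! 0 = u\<close> u1 n ws(3) unfolding us_def by simp
  qed fact+
qed

lemma symmetric_mat_deflation:
  fixes C :: "real mat"
  assumes C: "C \<in> carrier_mat (Suc m) (Suc m)" "C\<^sup>T = C"
    and u: "u \<in> carrier_vec (Suc m)" "u \<bullet> u = 1" and Cu: "C *\<^sub>v u = e \<cdot>\<^sub>v u"
  obtains U C' where "U \<in> carrier_mat (Suc m) (Suc m)" "U * U\<^sup>T = 1\<^sub>m (Suc m)" "U\<^sup>T * U = 1\<^sub>m (Suc m)"
    "C' \<in> carrier_mat m m" "C'\<^sup>T = C'"
    "U\<^sup>T * C * U = four_block_mat (e \<cdot>\<^sub>m 1\<^sub>m 1) (0\<^sub>m 1 m) (0\<^sub>m m 1) C'"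
proof -
  let ?n = "Suc m"
  obtain U where U: "U \<in> carrier_mat ?n ?n" "U\<^sup>T * U = 1\<^sub>m ?n" "U * U\<^sup>T = 1\<^sub>m ?n" "col U 0 = u"
    using orthogonal_mat_with_first_col[OF u] .
  define T where "T = U\<^sup>T * C * U"
  have T: "T \<in> carrier_mat ?n ?n" using U C unfolding T_def by auto
  have T_sym: "T $$ (i, j) = T $$ (j, i)" if "i < ?n" "j < ?n" for i j
  proof -
    have "T\<^sup>T = U\<^sup>T * C\<^sup>T * U"
      unfolding T_def using U C
      by (simp add: transpose_mult[of _ ?n ?n _ ?n] assoc_mult_mat[of _ ?n ?n _ ?n _ ?n])
    then have "T\<^sup>T = T" unfolding T_def C(2) .
    then show ?thesis using that T by (metis carrier_matD index_transpose_mat(1))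
  qed
  have T_col0: "T $$ (i, 0) = (if i = 0 then e else 0)" if i: "i < ?n" for i
  proof -
    have "T = U\<^sup>T * (C * U)"
      unfolding T_def using U C by (intro assoc_mult_mat[of _ ?n ?n _ ?n _ ?n]) auto
    then have "T $$ (i, 0) = row U\<^sup>T i \<bullet> col (C * U) 0"
      using U C i by (simp only: index_mult_mat(1)) auto
    also have "row U\<^sup>T i = col U i" using U i by simp
    also have "col (C * U) 0 = C *\<^sub>v u" using col_mult2[OF C(1) U(1)] U(4) by simp
    also have "col U i \<bullet> (C *\<^sub>v u) = e * (col U i \<bullet> u)"
      using U i u by (simp add: Cu)
    also have "col U i \<bullet> u = (U\<^sup>T * U) $$ (i, 0)"
      using U(1,4) i by simp
    finally show ?thesis using U(2) i by simp
  qed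
  have T_row0: "T $$ (0, j) = (if j = 0 then e else 0)" if "j < ?n" for j
    using T_sym[OF _ that] T_col0[OF that] by simp
  define C' where "C' = mat m m (\<lambda>(i, j). T $$ (Suc i, Suc j))"
  have T_block: "T = four_block_mat (e \<cdot>\<^sub>m 1\<^sub>m 1) (0\<^sub>m 1 m) (0\<^sub>m m 1) C'"
  proof (rule eq_matI)
    fix i j assume "i < dim_row (four_block_mat (e \<cdot>\<^sub>m 1\<^sub>m 1) (0\<^sub>m 1 m) (0\<^sub>m m 1) C')"
      "j < dim_col (four_block_mat (e \<cdot>\<^sub>m 1\<^sub>m 1) (0\<^sub>m 1 m) (0\<^sub>m m 1) C')"
    then have ij: "i < ?n" "j < ?n" unfolding C'_def by auto
    show "T $$ (i, j) = four_block_mat (e \<cdot>\<^sub>m 1\<^sub>m 1) (0\<^sub>m 1 m) (0\<^sub>m m 1) C' $$ (i, j)"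
    proof (cases "i = 0 \<or> j = 0")
      case True
      then show ?thesis using T_col0 T_row0 ij unfolding C'_def by auto
    next
      case False
      then show ?thesis using ij unfolding C'_def by (cases i; cases j) auto
    qed
  qed (use T C'_def in auto)
  have C'_sym: "C'\<^sup>T = C'" unfolding C'_def using T_sym by (intro eq_matI) auto
  show thesis
    by (rule that[OF U(1,3,2) _ C'_sym T_block[unfolded T_def]]) (simp add: C'_def)
qed

lemma pd_if_eigenvalues_pos:
  fixes C :: "real mat"
  assumes "C \<in> carrier_mat n n" "C\<^sup>T = C" "\<forall>e. eigenvalue C e \<longrightarrow> 0 < e"
  shows "pd C"
  using assms
proof (induction n arbitrary: C)
  case 0
  then show ?case unfolding pd_def by auto
next
  case (Suc m)
  note C = Suc.prems(1,2)
  obtain e where e: "eigenvalue C e"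
    using real_symmetric_mat_has_eigenvalue[OF C] by blast
  obtain v where v: "v \<in> carrier_vec (Suc m)" "v \<noteq> 0\<^sub>v (Suc m)" and Cv: "C *\<^sub>v v = e \<cdot>\<^sub>v v"
    using e C unfolding eigenvalue_def eigenvector_def by auto
  have "0 < v \<bullet> v"
    using v real_scalar_prod_self_nonneg[of v] real_scalar_prod_self_eq_0_iff[of v] by (simp add: less_le)
  define u where "u = (1 / sqrt (v \<bullet> v)) \<cdot>\<^sub>v v"
  have u: "u \<in> carrier_vec (Suc m)" "u \<bullet> u = 1" and Cu: "C *\<^sub>v u = e \<cdot>\<^sub>v u"
    using v Cv C \<open>0 < v \<bullet> v\<close> unfolding u_def
    by (auto simp: mult_mat_vec real_sqrt_mult[symmetric] power2_eq_square[symmetric] mult.commute)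
  obtain U C' where U: "U \<in> carrier_mat (Suc m) (Suc m)" "U * U\<^sup>T = 1\<^sub>m (Suc m)" "U\<^sup>T * U = 1\<^sub>m (Suc m)"
    and C': "C' \<in> carrier_mat m m" "C'\<^sup>T = C'"
    and T: "U\<^sup>T * C * U = four_block_mat (e \<cdot>\<^sub>m 1\<^sub>m 1) (0\<^sub>m 1 m) (0\<^sub>m m 1) C'"
    using symmetric_mat_deflation[OF C u Cu] .
  \<comment> \<open>the spectrum of the deflated block C' is contained in that of C\<close>
  have "similar_mat (U\<^sup>T * C * U) C"
    by (rule similar_matI[of _ _ "U\<^sup>T" U "Suc m"]) (use U C in auto)
  then have "char_poly C = char_poly (U\<^sup>T * C * U)" by (simp add: char_poly_similar)
  also have "\<dots> = char_poly (e \<cdot>\<^sub>m 1\<^sub>m 1) * char_poly C'"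
    unfolding T by (rule char_poly_four_block_zeros_col) (use C' in auto)
  finally have "char_poly C = char_poly (e \<cdot>\<^sub>m 1\<^sub>m 1) * char_poly C'" .
  then have "\<forall>f. eigenvalue C' f \<longrightarrow> 0 < f"
    using Suc.prems(3) eigenvalue_root_char_poly[OF C(1)] eigenvalue_root_char_poly[OF C'(1)] by auto
  then have "pd C'" using Suc.IH C' by blast
  moreover have "0 < e" using Suc.prems(3) e by blast
  ultimately have "pd (U\<^sup>T * C * U)"
    unfolding T using pd_four_block_mat_diag[OF _ pd_smult_one_mat C'(1)] by auto
  then show "pd C" using pd_if_pd_orthogonal_congruence[OF U(1,2) C] by blast
qed

lemma eigenvalue_smult_one_mat_minus:
  fixes B :: "'a :: comm_ring_1 mat"
  assumes B: "B \<in> carrier_mat n n" and ev: "eigenvalue (\<eta> \<cdot>\<^sub>m 1\<^sub>m n - B) f"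
  shows "eigenvalue B (\<eta> - f)"
proof -
  obtain w where w: "w \<in> carrier_vec n" "w \<noteq> 0\<^sub>v n" "(\<eta> \<cdot>\<^sub>m 1\<^sub>m n - B) *\<^sub>v w = f \<cdot>\<^sub>v w"
    using ev B unfolding eigenvalue_def eigenvector_def by auto
  have Bw: "\<eta> \<cdot>\<^sub>v w - B *\<^sub>v w = f \<cdot>\<^sub>v w"
    using w B by (simp add: minus_mult_distrib_mat_vec[of _ n n] smult_mat_mult_vec[of _ n n])
  have "B *\<^sub>v w = (\<eta> - f) \<cdot>\<^sub>v w"
  proof (rule eq_vecI)
    fix i assume "i < dim_vec ((\<eta> - f) \<cdot>\<^sub>v w)"
    then have i: "i < n" using w by simp
    have "(\<eta> \<cdot>\<^sub>v w - B *\<^sub>v w) $ i = (f \<cdot>\<^sub>v w) $ i" by (simp only: Bw)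
    then have "\<eta> * w $ i - (B *\<^sub>v w) $ i = f * w $ i" using i w B by simp
    then show "(B *\<^sub>v w) $ i = ((\<eta> - f) \<cdot>\<^sub>v w) $ i"
      using i w B by (simp add: left_diff_distrib eq_diff_eq diff_eq_eq add.commute)
  qed (use B w in auto)
  then show ?thesis using w B unfolding eigenvalue_def eigenvector_def by auto
qed

lemma pd_smult_one_mat_minus_if_eigenvalues_less:
  fixes B :: "real mat"
  assumes B: "B \<in> carrier_mat n n" "B\<^sup>T = B" and ev: "\<forall>e. eigenvalue B e \<longrightarrow> e < \<eta>"
  shows "pd (\<eta> \<cdot>\<^sub>m 1\<^sub>m n - B)"
proof (rule pd_if_eigenvalues_pos)
  show "(\<eta> \<cdot>\<^sub>m 1\<^sub>m n - B)\<^sup>T = \<eta> \<cdot>\<^sub>m 1\<^sub>m n - B"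
    using B by (intro eq_matI) (auto, metis index_transpose_mat(1) carrier_matD)
  show "\<forall>f. eigenvalue (\<eta> \<cdot>\<^sub>m 1\<^sub>m n - B) f \<longrightarrow> 0 < f"
    using eigenvalue_smult_one_mat_minus[OF B(1)] ev by force
qed (use B in auto)

section \<open>Saddle-point and arrowhead matrices\<close>

lemma hcat_carrier_mat:
  "\<forall>X \<in> set Xs. dim_row X = n \<Longrightarrow> hcat n Xs \<in> carrier_mat n (sum_list (map dim_col Xs))"
proof (induction Xs)
  case (Cons X Xs)
  have X: "X \<in> carrier_mat n (dim_col X)" using Cons.prems by auto
  have Xs: "hcat n Xs \<in> carrier_mat n (sum_list (map dim_col Xs))" using Cons by simp
  have "four_block_mat X (hcat n Xs) (0\<^sub>m 0 (dim_col X)) (0\<^sub>m 0 (dim_col (hcat n Xs)))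
      \<in> carrier_mat (n + 0) (dim_col X + sum_list (map dim_col Xs))"
    using Xs by (intro four_block_carrier_mat[OF X]) auto
  then show ?case by simp
qed simp

lemma hcat_Cons_mult_vec:
  assumes X: "X \<in> carrier_mat n k" and Xs: "hcat n Xs \<in> carrier_mat n s"
    and a: "a \<in> carrier_vec k" and w: "w \<in> carrier_vec s"
  shows "hcat n (X # Xs) *\<^sub>v (a @\<^sub>v w) = X *\<^sub>v a + hcat n Xs *\<^sub>v w"
proof -
  have "hcat n (X # Xs) = four_block_mat X (hcat n Xs) (0\<^sub>m 0 k) (0\<^sub>m 0 s)"
    using X Xs by simp
  then have "hcat n (X # Xs) *\<^sub>v (a @\<^sub>v w) = (X *\<^sub>v a + hcat n Xs *\<^sub>v w) @\<^sub>v (0\<^sub>m 0 k *\<^sub>v a + 0\<^sub>m 0 s *\<^sub>v w)"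
    using four_block_mat_mult_vec[OF X Xs zero_carrier_mat zero_carrier_mat a w] by simp
  also have "\<dots> = X *\<^sub>v a + hcat n Xs *\<^sub>v w"
    using X Xs a w by (intro eq_vecI) auto
  finally show ?thesis .
qed

definition saddle_mat :: "'a :: comm_ring_1 mat \<Rightarrow> 'a mat \<Rightarrow> 'a \<Rightarrow> 'a mat" where
  "saddle_mat L G d = four_block_mat L G\<^sup>T G (d \<cdot>\<^sub>m 1\<^sub>m (dim_row G))"

definition arrowhead_mat :: "('a :: comm_ring_1 mat \<times> 'a mat) list \<Rightarrow> nat \<Rightarrow> 'a \<Rightarrow> 'a mat" where
  "arrowhead_mat LGs p d =
     saddle_mat (diag_block_mat (map fst LGs)) (hcat p (map snd LGs)) (of_nat (length LGs) * d)"

definition arrowhead_blocks :: "nat \<Rightarrow> ('a :: comm_ring_1 mat \<times> 'a mat) list \<Rightarrow> bool" where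
  "arrowhead_blocks p LGs \<longleftrightarrow> (\<forall>(L, G) \<in> set LGs.
     dim_row G = p \<and> L \<in> carrier_mat (dim_col G) (dim_col G) \<and> L\<^sup>T = L)"

definition arrowhead_dim :: "('a mat \<times> 'a mat) list \<Rightarrow> nat" where
  "arrowhead_dim LGs = sum_list (map (dim_col \<circ> snd) LGs)"

lemma arrowhead_dim_simps[simp]:
  "arrowhead_dim [] = 0" "arrowhead_dim ((L, G) # LGs) = dim_col G + arrowhead_dim LGs"
  unfolding arrowhead_dim_def by simp_all

lemma quadratic_form_saddle_mat:
  fixes L :: "'a :: comm_ring_1 mat"
  assumes L: "L \<in> carrier_mat k k" and G: "G \<in> carrier_mat p k"
    and a: "a \<in> carrier_vec k" and z: "z \<in> carrier_vec p"
  shows "(a @\<^sub>v z) \<bullet> (saddle_mat L G d *\<^sub>v (a @\<^sub>v z)) =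
     a \<bullet> (L *\<^sub>v a) + 2 * (z \<bullet> (G *\<^sub>v a)) + d * (z \<bullet> z)"
proof -
  have GT: "a \<bullet> (G\<^sup>T *\<^sub>v z) = z \<bullet> (G *\<^sub>v a)"
    using transpose_vec_mult_scalar[of "G\<^sup>T" k p z a] comm_scalar_prod[of "G *\<^sub>v a" p z] G a z
    by simp
  have D: "z \<bullet> ((d \<cdot>\<^sub>m 1\<^sub>m p) *\<^sub>v z) = d * (z \<bullet> z)"
    using z by (simp add: smult_mat_mult_vec[of _ p p])
  have "dim_row G = p" using G by simp
  then have "(a @\<^sub>v z) \<bullet> (saddle_mat L G d *\<^sub>v (a @\<^sub>v z)) =
      a \<bullet> (L *\<^sub>v a) + a \<bullet> (G\<^sup>T *\<^sub>v z) + z \<bullet> (G *\<^sub>v a) + z \<bullet> ((d \<cdot>\<^sub>m 1\<^sub>m p) *\<^sub>v z)"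
    unfolding saddle_mat_def \<open>dim_row G = p\<close> using G
    by (intro quadratic_form_four_block_mat[OF L _ G _ a z]) auto
  then show ?thesis by (simp add: GT D)
qed

lemma arrowhead_blocks_Cons:
  "arrowhead_blocks p ((L, G) # LGs) \<longleftrightarrow>
     dim_row G = p \<and> L \<in> carrier_mat (dim_col G) (dim_col G) \<and> L\<^sup>T = L \<and>
     arrowhead_blocks p LGs"
  unfolding arrowhead_blocks_def by auto

lemma arrowhead_blocks_carrier:
  assumes "arrowhead_blocks p LGs"
  defines "s \<equiv> arrowhead_dim LGs"
  shows "diag_block_mat (map fst LGs) \<in> carrier_mat s s"
    and "(diag_block_mat (map fst LGs))\<^sup>T = diag_block_mat (map fst LGs)"
    and "hcat p (map snd LGs) \<in> carrier_mat p s"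
proof -
  have "\<forall>G \<in> set (map snd LGs). dim_row G = p"
    using assms(1) unfolding arrowhead_blocks_def by auto
  from hcat_carrier_mat[OF this] show "hcat p (map snd LGs) \<in> carrier_mat p s"
    unfolding s_def arrowhead_dim_def by (simp add: comp_def)
  have "diag_block_mat (map fst LGs) \<in> carrier_mat s s \<and>
      (diag_block_mat (map fst LGs))\<^sup>T = diag_block_mat (map fst LGs)"
    using assms(1) unfolding s_def
  proof (induction LGs)
    case (Cons LG LGs)
    obtain L G where LG: "LG = (L, G)" by force
    let ?D = "diag_block_mat (map fst LGs)" and ?s = "arrowhead_dim LGs"
    have L: "L \<in> carrier_mat (dim_col G) (dim_col G)" "L\<^sup>T = L"
      and D: "?D \<in> carrier_mat ?s ?s" "?D\<^sup>T = ?D"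
      using Cons unfolding LG arrowhead_blocks_Cons by auto
    have "diag_block_mat (map fst (LG # LGs)) = four_block_mat L (0\<^sub>m (dim_col G) ?s) (0\<^sub>m ?s (dim_col G)) ?D"
      using L D unfolding LG by (simp add: Let_def)
    moreover have "(four_block_mat L (0\<^sub>m (dim_col G) ?s) (0\<^sub>m ?s (dim_col G)) ?D)\<^sup>T =
        four_block_mat L (0\<^sub>m (dim_col G) ?s) (0\<^sub>m ?s (dim_col G)) ?D"
      using transpose_four_block_mat[OF L(1) zero_carrier_mat zero_carrier_mat D(1)] L D by simp
    ultimately show ?case using L D unfolding LG by simp
  qed simp
  then show "diag_block_mat (map fst LGs) \<in> carrier_mat s s"
    and "(diag_block_mat (map fst LGs))\<^sup>T = diag_block_mat (map fst LGs)" by auto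
qed

lemma quadratic_form_arrowhead_mat_Cons:
  fixes L :: "'a :: comm_ring_1 mat"
  assumes L: "L \<in> carrier_mat k k" and G: "G \<in> carrier_mat p k"
    and D: "diag_block_mat (map fst LGs) \<in> carrier_mat s s" and H: "hcat p (map snd LGs) \<in> carrier_mat p s"
    and a: "a \<in> carrier_vec k" and w: "w \<in> carrier_vec s" and z: "z \<in> carrier_vec p"
  shows "((a @\<^sub>v w) @\<^sub>v z) \<bullet> (arrowhead_mat ((L, G) # LGs) p d *\<^sub>v ((a @\<^sub>v w) @\<^sub>v z)) =
    (a @\<^sub>v z) \<bullet> (saddle_mat L G d *\<^sub>v (a @\<^sub>v z)) + (w @\<^sub>v z) \<bullet> (arrowhead_mat LGs p d *\<^sub>v (w @\<^sub>v z))"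
proof -
  let ?D = "diag_block_mat (map fst LGs)" and ?H = "hcat p (map snd LGs)"
  have diag: "diag_block_mat (map fst ((L, G) # LGs)) = four_block_mat L (0\<^sub>m k s) (0\<^sub>m s k) ?D"
    using L D by (simp add: Let_def)
  have "hcat p (map snd ((L, G) # LGs)) = four_block_mat G ?H (0\<^sub>m 0 k) (0\<^sub>m 0 s)"
    using G H by simp
  then have H': "hcat p (map snd ((L, G) # LGs)) \<in> carrier_mat p (k + s)"
    using four_block_carrier_mat[OF G zero_carrier_mat[of 0 s]] by simp
  have "(a @\<^sub>v w) \<bullet> (diag_block_mat (map fst ((L, G) # LGs)) *\<^sub>v (a @\<^sub>v w)) =
      a \<bullet> (L *\<^sub>v a) + w \<bullet> (?D *\<^sub>v w)"
    unfolding diag using quadratic_form_four_block_mat[OF L _ _ D a w] a w by simp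
  moreover have "z \<bullet> (hcat p (map snd ((L, G) # LGs)) *\<^sub>v (a @\<^sub>v w)) = z \<bullet> (G *\<^sub>v a) + z \<bullet> (?H *\<^sub>v w)"
    using hcat_Cons_mult_vec[OF G H a w] G H a w z by (simp add: scalar_prod_add_distrib[of _ p])
  ultimately show ?thesis
    unfolding arrowhead_mat_def
    using quadratic_form_saddle_mat[OF L G a z] quadratic_form_saddle_mat[OF D H w z]
      quadratic_form_saddle_mat[OF _ H', of "diag_block_mat (map fst ((L, G) # LGs))" "a @\<^sub>v w" z] diag L D a w z
    by (simp add: algebra_simps)
qed

lemma dim_row_saddle_mat[simp]: "dim_row (saddle_mat L G d) = dim_row L + dim_row G"
  unfolding saddle_mat_def by simp

lemma saddle_mat_carrier:
  assumes "L \<in> carrier_mat k k" "G \<in> carrier_mat p k"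
  shows "saddle_mat L G d \<in> carrier_mat (k + p) (k + p)"
  using assms unfolding saddle_mat_def by auto

lemma saddle_mat_transpose:
  assumes L: "L \<in> carrier_mat k k" "L\<^sup>T = L" and G: "G \<in> carrier_mat p k"
  shows "(saddle_mat L G d)\<^sup>T = saddle_mat L G d"
proof -
  have "(d \<cdot>\<^sub>m 1\<^sub>m p)\<^sup>T = d \<cdot>\<^sub>m 1\<^sub>m p" by (rule eq_matI) auto
  then show ?thesis
    using L G unfolding saddle_mat_def
    by (simp add: transpose_four_block_mat[OF L(1) transpose_carrier_mat[THEN iffD2, OF G] G])
qed

lemma arrowhead_mat_carrier:
  assumes "arrowhead_blocks p LGs"
  shows "arrowhead_mat LGs p d \<in> carrier_mat (arrowhead_dim LGs + p) (arrowhead_dim LGs + p)"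
    and "(arrowhead_mat LGs p d)\<^sup>T = arrowhead_mat LGs p d"
  using arrowhead_blocks_carrier[OF assms] unfolding arrowhead_mat_def
  by (auto intro: saddle_mat_carrier saddle_mat_transpose)

lemma dim_row_arrowhead_mat:
  "arrowhead_blocks p LGs \<Longrightarrow> dim_row (arrowhead_mat LGs p d) = arrowhead_dim LGs + p"
  using arrowhead_mat_carrier(1) by blast

lemma quadratic_form_arrowhead_mat_Cons_split:
  fixes L :: "'a :: comm_ring_1 mat"
  assumes blocks: "arrowhead_blocks p ((L, G) # LGs)"
    and w: "w \<in> carrier_vec (arrowhead_dim ((L, G) # LGs))" and z: "z \<in> carrier_vec p"
  obtains a w' where "a \<in> carrier_vec (dim_col G)" "w' \<in> carrier_vec (arrowhead_dim LGs)" "w = a @\<^sub>v w'"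
    "(w @\<^sub>v z) \<bullet> (arrowhead_mat ((L, G) # LGs) p d *\<^sub>v (w @\<^sub>v z)) =
       (a @\<^sub>v z) \<bullet> (saddle_mat L G d *\<^sub>v (a @\<^sub>v z)) + (w' @\<^sub>v z) \<bullet> (arrowhead_mat LGs p d *\<^sub>v (w' @\<^sub>v z))"
proof -
  define k where "k = dim_col G"
  have L: "L \<in> carrier_mat k k" and G: "G \<in> carrier_mat p k" and blocks': "arrowhead_blocks p LGs"
    using blocks unfolding arrowhead_blocks_Cons k_def by auto
  define a w' where "a = vec_first w k" and "w' = vec_last w (arrowhead_dim LGs)"
  have a: "a \<in> carrier_vec k" and w': "w' \<in> carrier_vec (arrowhead_dim LGs)" and "w = a @\<^sub>v w'"
    using w unfolding a_def w'_def k_def by auto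
  with quadratic_form_arrowhead_mat_Cons[OF L G arrowhead_blocks_carrier(1,3)[OF blocks'] a w' z]
  show thesis using that unfolding k_def by blast
qed

lemma quadratic_form_arrowhead_mat_nonneg:
  fixes LGs :: "(real mat \<times> real mat) list"
  assumes "arrowhead_blocks p LGs" "\<forall>(L, G) \<in> set LGs. psd (saddle_mat L G d)"
    and "w \<in> carrier_vec (arrowhead_dim LGs)" "z \<in> carrier_vec p"
  shows "0 \<le> (w @\<^sub>v z) \<bullet> (arrowhead_mat LGs p d *\<^sub>v (w @\<^sub>v z))"
  using assms
proof (induction LGs arbitrary: w)
  case Nil
  then show ?case
    using quadratic_form_saddle_mat[of "0\<^sub>m 0 0" 0 "0\<^sub>m p 0" p w z 0] unfolding arrowhead_mat_def by simp
next
  case (Cons LG LGs)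
  obtain L G where LG: "LG = (L, G)" by force
  from quadratic_form_arrowhead_mat_Cons_split[OF Cons.prems(1,3,4)[unfolded LG]]
  obtain a w' where a: "a \<in> carrier_vec (dim_col G)" and w': "w' \<in> carrier_vec (arrowhead_dim LGs)"
    and split: "(w @\<^sub>v z) \<bullet> (arrowhead_mat (LG # LGs) p d *\<^sub>v (w @\<^sub>v z)) =
      (a @\<^sub>v z) \<bullet> (saddle_mat L G d *\<^sub>v (a @\<^sub>v z)) + (w' @\<^sub>v z) \<bullet> (arrowhead_mat LGs p d *\<^sub>v (w' @\<^sub>v z))"
    unfolding LG by blast
  have "0 \<le> (a @\<^sub>v z) \<bullet> (saddle_mat L G d *\<^sub>v (a @\<^sub>v z))"
    using Cons.prems(1,2,4) a unfolding LG psd_def arrowhead_blocks_Cons by auto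
  moreover have "0 \<le> (w' @\<^sub>v z) \<bullet> (arrowhead_mat LGs p d *\<^sub>v (w' @\<^sub>v z))"
    using Cons.IH[OF _ _ w' Cons.prems(4)] Cons.prems(1,2) unfolding LG arrowhead_blocks_Cons by simp
  ultimately show ?case unfolding split by simp
qed

lemma quadratic_form_arrowhead_mat_eq_0:
  fixes LGs :: "(real mat \<times> real mat) list"
  assumes blocks: "arrowhead_blocks p LGs" and psd: "\<forall>(L, G) \<in> set LGs. psd (saddle_mat L G d)"
    and pd: "\<forall>(L, G) \<in> set LGs. pd L"
    and w: "w \<in> carrier_vec (arrowhead_dim LGs)" and z: "z \<in> carrier_vec p"
    and eq_0: "(w @\<^sub>v z) \<bullet> (arrowhead_mat LGs p d *\<^sub>v (w @\<^sub>v z)) = 0"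
  shows "z = 0\<^sub>v p \<Longrightarrow> w = 0\<^sub>v (arrowhead_dim LGs)"
    and "\<exists>(L, G) \<in> set LGs. pd (saddle_mat L G d) \<Longrightarrow> z = 0\<^sub>v p"
proof -
  have "(z = 0\<^sub>v p \<longrightarrow> w = 0\<^sub>v (arrowhead_dim LGs)) \<and>
      ((\<exists>(L, G) \<in> set LGs. pd (saddle_mat L G d)) \<longrightarrow> z = 0\<^sub>v p)"
    using blocks psd pd w eq_0
  proof (induction LGs arbitrary: w)
    case (Cons LG LGs)
    obtain L G where LG: "LG = (L, G)" by force
    from quadratic_form_arrowhead_mat_Cons_split[OF Cons.prems(1,4)[unfolded LG] z]
    obtain a w' where a: "a \<in> carrier_vec (dim_col G)" and w': "w' \<in> carrier_vec (arrowhead_dim LGs)"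
      and w: "w = a @\<^sub>v w'"
      and split: "(w @\<^sub>v z) \<bullet> (arrowhead_mat ((L, G) # LGs) p d *\<^sub>v (w @\<^sub>v z)) =
        (a @\<^sub>v z) \<bullet> (saddle_mat L G d *\<^sub>v (a @\<^sub>v z)) + (w' @\<^sub>v z) \<bullet> (arrowhead_mat LGs p d *\<^sub>v (w' @\<^sub>v z))"
      unfolding LG by blast
    define k where "k = dim_col G"
    have L: "L \<in> carrier_mat k k" "pd L" and G: "G \<in> carrier_mat p k"
      and blocks: "arrowhead_blocks p LGs" and psd: "\<forall>(L, G) \<in> set LGs. psd (saddle_mat L G d)"
      and pd: "\<forall>(L, G) \<in> set LGs. pd L"
      using Cons.prems(1-3) unfolding LG arrowhead_blocks_Cons k_def by auto
    have a: "a \<in> carrier_vec k" using a unfolding k_def .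
    have "0 \<le> (a @\<^sub>v z) \<bullet> (saddle_mat L G d *\<^sub>v (a @\<^sub>v z))"
      using Cons.prems(2) L G a z unfolding LG psd_def by auto
    moreover have "0 \<le> (w' @\<^sub>v z) \<bullet> (arrowhead_mat LGs p d *\<^sub>v (w' @\<^sub>v z))"
      using quadratic_form_arrowhead_mat_nonneg[OF blocks psd w' z] .
    ultimately have q: "(a @\<^sub>v z) \<bullet> (saddle_mat L G d *\<^sub>v (a @\<^sub>v z)) = 0"
      and r: "(w' @\<^sub>v z) \<bullet> (arrowhead_mat LGs p d *\<^sub>v (w' @\<^sub>v z)) = 0"
      using Cons.prems(5)[unfolded LG split] by linarith+
    note IH = Cons.IH[OF blocks psd pd w' r]
    show ?case
    proof (intro conjI impI)
      assume "z = 0\<^sub>v p"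
      then have "a \<bullet> (L *\<^sub>v a) = 0"
        using q quadratic_form_saddle_mat[OF L(1) G a z, of d] G a by simp
      then have "a = 0\<^sub>v k" using L a unfolding pd_def by auto
      with IH \<open>z = 0\<^sub>v p\<close> show "w = 0\<^sub>v (arrowhead_dim (LG # LGs))" unfolding w LG k_def by auto
    next
      assume "\<exists>(L, G) \<in> set (LG # LGs). pd (saddle_mat L G d)"
      then consider "pd (saddle_mat L G d)" | "\<exists>(L, G) \<in> set LGs. pd (saddle_mat L G d)"
        unfolding LG by auto
      then show "z = 0\<^sub>v p"
      proof cases
        case 1
        then have "a @\<^sub>v z = 0\<^sub>v (k + p)" using q L G a z unfolding pd_def by fastforce
        then show ?thesis using append_vec_eq_0_iff[OF a z] by simp
      qed (use IH in blast)
    qed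
  qed auto
  then show "z = 0\<^sub>v p \<Longrightarrow> w = 0\<^sub>v (arrowhead_dim LGs)"
    and "\<exists>(L, G) \<in> set LGs. pd (saddle_mat L G d) \<Longrightarrow> z = 0\<^sub>v p" by auto
qed

lemma psd_arrowhead_mat:
  fixes LGs :: "(real mat \<times> real mat) list"
  assumes blocks: "arrowhead_blocks p LGs" and psd: "\<forall>(L, G) \<in> set LGs. psd (saddle_mat L G d)"
  shows "psd (arrowhead_mat LGs p d)"
  unfolding psd_def
proof (intro conjI ballI)
  fix x :: "real vec"
  assume "x \<in> carrier_vec (dim_row (arrowhead_mat LGs p d))"
  then have "x = vec_first x (arrowhead_dim LGs) @\<^sub>v vec_last x p"
    unfolding dim_row_arrowhead_mat[OF blocks] by simp
  then show "0 \<le> x \<bullet> (arrowhead_mat LGs p d *\<^sub>v x)"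
    using quadratic_form_arrowhead_mat_nonneg[OF blocks psd vec_first_carrier vec_last_carrier] by metis
qed (use arrowhead_mat_carrier[OF blocks] in \<open>auto simp: dim_row_arrowhead_mat[OF blocks]\<close>)

lemma pd_arrowhead_mat:
  fixes LGs :: "(real mat \<times> real mat) list"
  assumes blocks: "arrowhead_blocks p LGs" and psd: "\<forall>(L, G) \<in> set LGs. psd (saddle_mat L G d)"
    and pd: "\<forall>(L, G) \<in> set LGs. pd L"
    and pd_block: "p = 0 \<or> (\<exists>(L, G) \<in> set LGs. pd (saddle_mat L G d))"
  shows "pd (arrowhead_mat LGs p d)"
  unfolding pd_def
proof (intro conjI ballI impI)
  let ?A = "arrowhead_mat LGs p d" and ?s = "arrowhead_dim LGs"
  fix x :: "real vec"
  assume x: "x \<in> carrier_vec (dim_row ?A)" and x0: "x \<noteq> 0\<^sub>v (dim_row ?A)"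
  define w z where "w = vec_first x ?s" and "z = vec_last x p"
  have w: "w \<in> carrier_vec ?s" and z: "z \<in> carrier_vec p" and xwz: "x = w @\<^sub>v z"
    using x unfolding w_def z_def dim_row_arrowhead_mat[OF blocks] by auto
  have "0 \<le> x \<bullet> (?A *\<^sub>v x)"
    unfolding xwz using quadratic_form_arrowhead_mat_nonneg[OF blocks psd w z] .
  moreover have "x \<bullet> (?A *\<^sub>v x) \<noteq> 0"
  proof
    assume "x \<bullet> (?A *\<^sub>v x) = 0"
    note eq_0 = quadratic_form_arrowhead_mat_eq_0[OF blocks psd pd w z this[unfolded xwz]]
    have "z = 0\<^sub>v p" using pd_block eq_0(2) z by auto
    with eq_0(1) have "x = 0\<^sub>v (dim_row ?A)" unfolding xwz dim_row_arrowhead_mat[OF blocks] by auto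
    with x0 show False ..
  qed
  ultimately show "0 < x \<bullet> (?A *\<^sub>v x)" by simp
qed (use arrowhead_mat_carrier[OF blocks] in \<open>auto simp: dim_row_arrowhead_mat[OF blocks]\<close>)

lemma quadratic_form_saddle_mat_gram:
  fixes G :: "real mat"
  assumes L: "L \<in> carrier_mat k k" and G: "G \<in> carrier_mat p k" and \<mu>: "0 < \<mu>"
    and a: "a \<in> carrier_vec k" and z: "z \<in> carrier_vec p"
  shows "(a @\<^sub>v z) \<bullet> (saddle_mat L G (1 / \<mu>) *\<^sub>v (a @\<^sub>v z)) =
    a \<bullet> ((L - \<mu> \<cdot>\<^sub>m (G\<^sup>T * G)) *\<^sub>v a) + (\<mu> \<cdot>\<^sub>v (G *\<^sub>v a) + z) \<bullet> (\<mu> \<cdot>\<^sub>v (G *\<^sub>v a) + z) / \<mu>"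
proof -
  define g where "g = G *\<^sub>v a"
  have g: "g \<in> carrier_vec p" using G a unfolding g_def by simp
  have "a \<bullet> ((L - \<mu> \<cdot>\<^sub>m (G\<^sup>T * G)) *\<^sub>v a) = a \<bullet> (L *\<^sub>v a - (\<mu> \<cdot>\<^sub>m (G\<^sup>T * G)) *\<^sub>v a)"
    using L G a by (simp add: minus_mult_distrib_mat_vec[of _ k k])
  also have "\<dots> = a \<bullet> (L *\<^sub>v a) - a \<bullet> ((\<mu> \<cdot>\<^sub>m (G\<^sup>T * G)) *\<^sub>v a)"
    using L G a by (intro scalar_prod_minus_distrib[of _ k] mult_mat_vec_carrier[of _ k k]) auto
  also have "a \<bullet> ((\<mu> \<cdot>\<^sub>m (G\<^sup>T * G)) *\<^sub>v a) = \<mu> * (g \<bullet> g)"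
    using transpose_vec_mult_scalar[of "G\<^sup>T" k p g a] G a g unfolding g_def
    by (simp add: smult_mat_mult_vec[of _ k k])
  finally have diff: "a \<bullet> ((L - \<mu> \<cdot>\<^sub>m (G\<^sup>T * G)) *\<^sub>v a) = a \<bullet> (L *\<^sub>v a) - \<mu> * (g \<bullet> g)" .
  have sq: "(\<mu> \<cdot>\<^sub>v g + z) \<bullet> (\<mu> \<cdot>\<^sub>v g + z) = \<mu>\<^sup>2 * (g \<bullet> g) + 2 * \<mu> * (z \<bullet> g) + z \<bullet> z"
    using g z comm_scalar_prod[OF g z]
    by (simp add: add_scalar_prod_distrib[of _ p] scalar_prod_add_distrib[of _ p] power2_eq_square algebra_simps)
  show ?thesis
    unfolding quadratic_form_saddle_mat[OF L G a z] g_def[symmetric] diff sq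
    using \<mu> by (simp add: field_simps power2_eq_square)
qed

lemma psd_saddle_mat:
  fixes G :: "real mat"
  assumes L: "L \<in> carrier_mat k k" "L\<^sup>T = L" and G: "G \<in> carrier_mat p k" and \<mu>: "0 < \<mu>"
    and psd: "psd (L - \<mu> \<cdot>\<^sub>m (G\<^sup>T * G))"
  shows "psd (saddle_mat L G (1 / \<mu>))"
  unfolding psd_def
proof (intro conjI ballI)
  fix x :: "real vec" assume "x \<in> carrier_vec (dim_row (saddle_mat L G (1 / \<mu>)))"
  then have x: "x \<in> carrier_vec (k + p)" using L(1) G by simp
  define a z where "a = vec_first x k" and "z = vec_last x p"
  have a: "a \<in> carrier_vec k" and z: "z \<in> carrier_vec p" and xaz: "x = a @\<^sub>v z"
    using x unfolding a_def z_def by auto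
  let ?r = "\<mu> \<cdot>\<^sub>v (G *\<^sub>v a) + z"
  have "0 \<le> a \<bullet> ((L - \<mu> \<cdot>\<^sub>m (G\<^sup>T * G)) *\<^sub>v a)"
    using psd L G a unfolding psd_def by simp
  moreover have "0 \<le> ?r \<bullet> ?r / \<mu>" using \<mu> real_scalar_prod_self_nonneg[of ?r] by simp
  ultimately show "0 \<le> x \<bullet> (saddle_mat L G (1 / \<mu>) *\<^sub>v x)"
    unfolding xaz quadratic_form_saddle_mat_gram[OF L(1) G \<mu> a z] by simp
qed (use L(1) G saddle_mat_carrier[OF L(1) G] saddle_mat_transpose[OF L G] in auto)

lemma pd_saddle_mat:
  fixes G :: "real mat"
  assumes L: "L \<in> carrier_mat k k" "L\<^sup>T = L" and G: "G \<in> carrier_mat p k" and \<mu>: "0 < \<mu>"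
    and pd: "pd (L - \<mu> \<cdot>\<^sub>m (G\<^sup>T * G))"
  shows "pd (saddle_mat L G (1 / \<mu>))"
  unfolding pd_def
proof (intro conjI ballI impI)
  let ?S = "saddle_mat L G (1 / \<mu>)"
  fix x :: "real vec" assume "x \<in> carrier_vec (dim_row ?S)" and x0: "x \<noteq> 0\<^sub>v (dim_row ?S)"
  then have x: "x \<in> carrier_vec (k + p)" and x0: "x \<noteq> 0\<^sub>v (k + p)"
    using L(1) G by auto
  define a z where "a = vec_first x k" and "z = vec_last x p"
  have a: "a \<in> carrier_vec k" and z: "z \<in> carrier_vec p" and xaz: "x = a @\<^sub>v z"
    using x unfolding a_def z_def by auto
  let ?r = "\<mu> \<cdot>\<^sub>v (G *\<^sub>v a) + z"
  have qf: "x \<bullet> (?S *\<^sub>v x) = a \<bullet> ((L - \<mu> \<cdot>\<^sub>m (G\<^sup>T * G)) *\<^sub>v a) + ?r \<bullet> ?r / \<mu>"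
    unfolding xaz by (rule quadratic_form_saddle_mat_gram[OF L(1) G \<mu> a z])
  have "0 \<le> a \<bullet> ((L - \<mu> \<cdot>\<^sub>m (G\<^sup>T * G)) *\<^sub>v a)"
    using pd_imp_psd[OF pd] L G a unfolding psd_def by simp
  moreover have "0 \<le> ?r \<bullet> ?r / \<mu>" using \<mu> real_scalar_prod_self_nonneg[of ?r] by simp
  moreover have "0 < a \<bullet> ((L - \<mu> \<cdot>\<^sub>m (G\<^sup>T * G)) *\<^sub>v a) \<or> 0 < ?r \<bullet> ?r / \<mu>"
  proof (cases "a = 0\<^sub>v k")
    case True
    then have "?r = z" "z \<noteq> 0\<^sub>v p" using G z x0 append_vec_eq_0_iff[OF a z] unfolding xaz by auto
    then show ?thesis
      using \<mu> z real_scalar_prod_self_nonneg[of z] real_scalar_prod_self_eq_0_iff[of z p]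
      by (simp add: less_le)
  next
    case False
    then show ?thesis using pd L G a unfolding pd_def by simp
  qed
  ultimately show "0 < x \<bullet> (?S *\<^sub>v x)" unfolding qf by linarith
qed (use L(1) G saddle_mat_carrier[OF L(1) G] saddle_mat_transpose[OF L G] in auto)

lemma pd_upper_left_if_pd_saddle_mat:
  fixes L :: "real mat"
  assumes L: "L \<in> carrier_mat k k" "L\<^sup>T = L" and G: "G \<in> carrier_mat p k"
    and pd: "pd (saddle_mat L G d)"
  shows "pd L"
  unfolding pd_def
proof (intro conjI ballI impI)
  fix a :: "real vec" assume "a \<in> carrier_vec (dim_row L)" "a \<noteq> 0\<^sub>v (dim_row L)"
  then have a: "a \<in> carrier_vec k" "a @\<^sub>v 0\<^sub>v p \<noteq> 0\<^sub>v (k + p)"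
    using L append_vec_eq_0_iff[of a k "0\<^sub>v p" p] by auto
  then have "0 < (a @\<^sub>v 0\<^sub>v p) \<bullet> (saddle_mat L G d *\<^sub>v (a @\<^sub>v 0\<^sub>v p))"
    using pd saddle_mat_carrier[OF L(1) G, of d] unfolding pd_def by auto
  then show "0 < a \<bullet> (L *\<^sub>v a)"
    using quadratic_form_saddle_mat[OF L(1) G a(1) zero_carrier_vec, of d] G a by simp
qed (use L in auto)

lemma psd_zero_mat: "psd (0\<^sub>m k k :: real mat)"
  unfolding psd_def by (auto intro: eq_matI)

lemma gram_mat_transpose: "(\<mu> \<cdot>\<^sub>m (G\<^sup>T * G))\<^sup>T = \<mu> \<cdot>\<^sub>m (G\<^sup>T * (G :: 'a :: comm_ring mat))"
  by (rule eq_matI) (auto simp: comm_scalar_prod[of _ "dim_row G"])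

lemma psd_saddle_mat_gram:
  fixes G :: "real mat"
  assumes G: "G \<in> carrier_mat p k" and \<mu>: "0 < \<mu>"
  shows "psd (saddle_mat (\<mu> \<cdot>\<^sub>m (G\<^sup>T * G)) G (1 / \<mu>))"
proof (rule psd_saddle_mat[OF _ gram_mat_transpose G \<mu>])
  show "\<mu> \<cdot>\<^sub>m (G\<^sup>T * G) \<in> carrier_mat k k" using G by simp
  then show "psd (\<mu> \<cdot>\<^sub>m (G\<^sup>T * G) - \<mu> \<cdot>\<^sub>m (G\<^sup>T * G))" using psd_zero_mat by simp
qed

lemma psd_saddle_mat_neg_one:
  assumes "0 < (\<mu> :: real)"
  shows "psd (saddle_mat (\<mu> \<cdot>\<^sub>m 1\<^sub>m p) (- 1\<^sub>m p) (1 / \<mu>))"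
proof -
  have "(- 1\<^sub>m p)\<^sup>T * (- 1\<^sub>m p) = (1\<^sub>m p :: real mat)" by (rule eq_matI) auto
  then show ?thesis using psd_saddle_mat_gram[of "- 1\<^sub>m p" p p \<mu>] assms by simp
qed

lemma block3_eq_arrowhead_mat:
  assumes "L1 \<in> carrier_mat p p" "L2 \<in> carrier_mat p p" "G1 \<in> carrier_mat p p" "G2 \<in> carrier_mat p p"
  shows "block3 L1 (0\<^sub>m p p) G1\<^sup>T (0\<^sub>m p p) L2 G2\<^sup>T G1 G2 ((2 * d) \<cdot>\<^sub>m 1\<^sub>m p) =
    arrowhead_mat [(L1, G1), (L2, G2)] p d"
proof -
  have "diag_block_mat [L1, L2] = four_block_mat L1 (0\<^sub>m p p) (0\<^sub>m p p) L2"
    using assms by (intro eq_matI) (auto simp: Let_def)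
  moreover have "hcat p [G1, G2] = hcat2 G1 G2"
    using assms unfolding hcat2_def by (intro eq_matI) auto
  moreover have "(hcat2 G1 G2)\<^sup>T = vcat2 G1\<^sup>T G2\<^sup>T"
    using assms unfolding hcat2_def vcat2_def by (intro eq_matI) auto
  moreover have "dim_row (hcat2 G1 G2) = p" using assms unfolding hcat2_def by simp
  ultimately show ?thesis unfolding arrowhead_mat_def saddle_mat_def block3_def by simp
qed

lemma pdim_Nil: "pdim n [] = 0"
  unfolding pdim_def Xmat_def by simp

lemma length_Ablocks[simp]: "length (Ablocks n Xs) = length Xs"
  unfolding Ablocks_def by simp

lemma smult_gram_plus_Sblock: "\<mu> \<cdot>\<^sub>m (A\<^sup>T * A) + Sblock \<mu> \<eta> A = \<eta> \<cdot>\<^sub>m 1\<^sub>m (dim_col A)"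
  unfolding Sblock_def by (rule eq_matI) auto

context
  fixes n :: nat and Xs :: "real mat list" and \<mu> :: real
  assumes rows: "\<forall>Xi \<in> set Xs. dim_row Xi = n" and mu_pos: "0 < \<mu>"
begin

lemma Xmat_carrier: "Xmat n Xs \<in> carrier_mat n (pdim n Xs)"
  using hcat_carrier_mat[OF rows] unfolding Xmat_def pdim_def by auto

lemma Amat_carrier: "Amat n Xs \<in> carrier_mat (pdim n Xs) (pdim n Xs)"
  using Xmat_carrier unfolding Amat_def by auto

lemma dim_row_Ablocks: "Ai \<in> set (Ablocks n Xs) \<Longrightarrow> dim_row Ai = pdim n Xs"
  using Xmat_carrier unfolding Ablocks_def by auto

lemma dim_row_Gmat: "dim_row (Gmat n Xs) = pdim n Xs"
proof -
  have "\<forall>G \<in> set (Ablocks n Xs @ [- 1\<^sub>m (pdim n Xs)]). dim_row G = pdim n Xs"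
    using dim_row_Ablocks by auto
  from hcat_carrier_mat[OF this] show ?thesis unfolding Gmat_def by simp
qed

lemma block3_eq_arrowhead_mat_Amat:
  assumes "L \<in> carrier_mat (pdim n Xs) (pdim n Xs)"
  shows "block3 L (0\<^sub>m (pdim n Xs) (pdim n Xs)) (Amat n Xs)\<^sup>T
      (0\<^sub>m (pdim n Xs) (pdim n Xs)) (\<mu> \<cdot>\<^sub>m 1\<^sub>m (pdim n Xs)) (- 1\<^sub>m (pdim n Xs))
      (Amat n Xs) (- 1\<^sub>m (pdim n Xs)) ((2 / \<mu>) \<cdot>\<^sub>m 1\<^sub>m (pdim n Xs)) =
    arrowhead_mat [(L, Amat n Xs), (\<mu> \<cdot>\<^sub>m 1\<^sub>m (pdim n Xs), - 1\<^sub>m (pdim n Xs))] (pdim n Xs) (1 / \<mu>)"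
proof -
  have "(- 1\<^sub>m (pdim n Xs))\<^sup>T = (- 1\<^sub>m (pdim n Xs) :: real mat)" by (simp add: transpose_uminus)
  then show ?thesis
    using block3_eq_arrowhead_mat[OF assms _ Amat_carrier, of "\<mu> \<cdot>\<^sub>m 1\<^sub>m (pdim n Xs)" "- 1\<^sub>m (pdim n Xs)" "1 / \<mu>"]
    by simp
qed

lemma psd_Mmat: "psd (Mmat n Xs \<mu>)"
proof -
  let ?p = "pdim n Xs" and ?A = "Amat n Xs"
  let ?LGs = "[(\<mu> \<cdot>\<^sub>m (?A\<^sup>T * ?A), ?A), (\<mu> \<cdot>\<^sub>m 1\<^sub>m ?p, - 1\<^sub>m ?p)]"
  have "arrowhead_blocks ?p ?LGs"
    using Amat_carrier gram_mat_transpose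
    unfolding arrowhead_blocks_def by (auto intro: eq_matI)
  moreover have "\<forall>(L, G) \<in> set ?LGs. psd (saddle_mat L G (1 / \<mu>))"
    using psd_saddle_mat_gram[OF Amat_carrier mu_pos] psd_saddle_mat_neg_one[OF mu_pos] by simp
  ultimately have "psd (arrowhead_mat ?LGs ?p (1 / \<mu>))"
    by (rule psd_arrowhead_mat)
  then show ?thesis
    using block3_eq_arrowhead_mat_Amat[of "\<mu> \<cdot>\<^sub>m (?A\<^sup>T * ?A)"] Amat_carrier
    unfolding Mmat_def Let_def by simp
qed

lemma pd_Hmat:
  assumes eta: "\<forall>e. eigenvalue (\<mu> \<cdot>\<^sub>m ((Amat n Xs)\<^sup>T * Amat n Xs)) e \<longrightarrow> e < \<eta>"
  shows "pd (Hmat n Xs \<mu> \<eta>)"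
proof -
  let ?p = "pdim n Xs" and ?A = "Amat n Xs"
  let ?LGs = "[(\<eta> \<cdot>\<^sub>m 1\<^sub>m ?p, ?A), (\<mu> \<cdot>\<^sub>m 1\<^sub>m ?p, - 1\<^sub>m ?p)]"
  have L: "\<eta> \<cdot>\<^sub>m 1\<^sub>m ?p \<in> carrier_mat ?p ?p" "(\<eta> \<cdot>\<^sub>m 1\<^sub>m ?p)\<^sup>T = \<eta> \<cdot>\<^sub>m 1\<^sub>m ?p"
    by (auto intro: eq_matI)
  have "pd (\<eta> \<cdot>\<^sub>m 1\<^sub>m ?p - \<mu> \<cdot>\<^sub>m (?A\<^sup>T * ?A))"
    using Amat_carrier gram_mat_transpose eta by (intro pd_smult_one_mat_minus_if_eigenvalues_less) auto
  from pd_saddle_mat[OF L Amat_carrier mu_pos this]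
  have pd1: "pd (saddle_mat (\<eta> \<cdot>\<^sub>m 1\<^sub>m ?p) ?A (1 / \<mu>))" .
  have "arrowhead_blocks ?p ?LGs"
    using Amat_carrier unfolding arrowhead_blocks_def by (auto intro: eq_matI)
  moreover have "\<forall>(L, G) \<in> set ?LGs. psd (saddle_mat L G (1 / \<mu>))"
    using pd_imp_psd[OF pd1] psd_saddle_mat_neg_one[OF mu_pos] by simp
  moreover have "\<forall>(L, G) \<in> set ?LGs. pd L"
    using pd_upper_left_if_pd_saddle_mat[OF L Amat_carrier pd1] pd_smult_one_mat[OF mu_pos] by simp
  moreover have "\<exists>(L, G) \<in> set ?LGs. pd (saddle_mat L G (1 / \<mu>))" using pd1 by auto
  ultimately have "pd (arrowhead_mat ?LGs ?p (1 / \<mu>))"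
    by (intro pd_arrowhead_mat) auto
  moreover have "\<mu> \<cdot>\<^sub>m (?A\<^sup>T * ?A) + Smat n Xs \<mu> \<eta> = \<eta> \<cdot>\<^sub>m 1\<^sub>m ?p"
    using Amat_carrier unfolding Smat_def by (intro eq_matI) auto
  ultimately show ?thesis
    using block3_eq_arrowhead_mat_Amat[OF L(1)] unfolding Hmat_def Let_def by simp
qed

lemma MKmat_eq_arrowhead_mat:
  "MKmat n Xs \<mu> = arrowhead_mat (map (\<lambda>Ai. (\<mu> \<cdot>\<^sub>m (Ai\<^sup>T * Ai), Ai)) (Ablocks n Xs)
     @ [(\<mu> \<cdot>\<^sub>m 1\<^sub>m (pdim n Xs), - 1\<^sub>m (pdim n Xs))]) (pdim n Xs) (1 / \<mu>)"
  using dim_row_Gmat unfolding MKmat_def Let_def LambdaK_def arrowhead_mat_def saddle_mat_def Gmat_def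
  by (simp add: o_def)

lemma psd_MKmat: "psd (MKmat n Xs \<mu>)"
proof -
  let ?p = "pdim n Xs"
  let ?LGs = "map (\<lambda>Ai. (\<mu> \<cdot>\<^sub>m (Ai\<^sup>T * Ai), Ai)) (Ablocks n Xs) @ [(\<mu> \<cdot>\<^sub>m 1\<^sub>m ?p, - 1\<^sub>m ?p)]"
  have "arrowhead_blocks ?p ?LGs"
    using dim_row_Ablocks gram_mat_transpose unfolding arrowhead_blocks_def by (auto intro: eq_matI)
  moreover have "psd (saddle_mat (\<mu> \<cdot>\<^sub>m (Ai\<^sup>T * Ai)) Ai (1 / \<mu>))" if "Ai \<in> set (Ablocks n Xs)" for Ai
    using psd_saddle_mat_gram[OF carrier_matI[OF dim_row_Ablocks[OF that] refl] mu_pos] .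
  then have "\<forall>(L, G) \<in> set ?LGs. psd (saddle_mat L G (1 / \<mu>))"
    using psd_saddle_mat_neg_one[OF mu_pos] by auto
  ultimately show ?thesis unfolding MKmat_eq_arrowhead_mat by (rule psd_arrowhead_mat)
qed

context
  fixes \<eta>s :: "real list"
  assumes len: "length \<eta>s = length Xs"
begin

lemma HKmat_eq_arrowhead_mat:
  "HKmat n Xs \<mu> \<eta>s = arrowhead_mat (map (\<lambda>(Ai, \<eta>i). (\<eta>i \<cdot>\<^sub>m 1\<^sub>m (dim_col Ai), Ai)) (zip (Ablocks n Xs) \<eta>s)
     @ [(\<mu> \<cdot>\<^sub>m 1\<^sub>m (pdim n Xs), - 1\<^sub>m (pdim n Xs))]) (pdim n Xs) (1 / \<mu>)"
proof -
  define LGs where "LGs = map (\<lambda>(Ai, \<eta>i). (\<eta>i \<cdot>\<^sub>m 1\<^sub>m (dim_col Ai), Ai)) (zip (Ablocks n Xs) \<eta>s)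
     @ [(\<mu> \<cdot>\<^sub>m 1\<^sub>m (pdim n Xs), - 1\<^sub>m (pdim n Xs))]"
  have "map fst LGs = map (\<lambda>(Ai, \<eta>i). \<mu> \<cdot>\<^sub>m (Ai\<^sup>T * Ai) + Sblock \<mu> \<eta>i Ai) (zip (Ablocks n Xs) \<eta>s)
      @ [\<mu> \<cdot>\<^sub>m 1\<^sub>m (pdim n Xs)]"
    unfolding LGs_def by (simp add: smult_gram_plus_Sblock split_def)
  moreover have "map snd LGs = Ablocks n Xs @ [- 1\<^sub>m (pdim n Xs)]"
    using len unfolding LGs_def by (intro nth_equalityI) (auto simp: nth_append)
  moreover have "length LGs = length Xs + 1" using len unfolding LGs_def by simp
  ultimately have "HKmat n Xs \<mu> \<eta>s = arrowhead_mat LGs (pdim n Xs) (1 / \<mu>)"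
    using dim_row_Gmat unfolding HKmat_def Let_def LambdaK_tilde_def arrowhead_mat_def saddle_mat_def Gmat_def
    by (simp add: field_simps)
  then show ?thesis unfolding LGs_def .
qed

lemma pd_saddle_mat_Ablocks:
  assumes etas: "\<forall>i < length Xs. \<forall>e.
       eigenvalue (\<mu> \<cdot>\<^sub>m ((Ablocks n Xs ! i)\<^sup>T * (Ablocks n Xs ! i))) e \<longrightarrow> e < \<eta>s ! i"
    and mem: "(Ai, \<eta>i) \<in> set (zip (Ablocks n Xs) \<eta>s)"
  shows "pd (saddle_mat (\<eta>i \<cdot>\<^sub>m 1\<^sub>m (dim_col Ai)) Ai (1 / \<mu>))" and "pd (\<eta>i \<cdot>\<^sub>m 1\<^sub>m (dim_col Ai))"
proof -
  obtain i where i: "i < length Xs" "Ai = Ablocks n Xs ! i" "\<eta>i = \<eta>s ! i"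
    using mem len by (auto simp: in_set_zip)
  have Ai: "Ai \<in> carrier_mat (pdim n Xs) (dim_col Ai)"
    using carrier_matI[OF dim_row_Ablocks refl] i by simp
  have L: "\<eta>i \<cdot>\<^sub>m 1\<^sub>m (dim_col Ai) \<in> carrier_mat (dim_col Ai) (dim_col Ai)"
    "(\<eta>i \<cdot>\<^sub>m 1\<^sub>m (dim_col Ai))\<^sup>T = \<eta>i \<cdot>\<^sub>m 1\<^sub>m (dim_col Ai)" by (auto intro: eq_matI)
  have "pd (\<eta>i \<cdot>\<^sub>m 1\<^sub>m (dim_col Ai) - \<mu> \<cdot>\<^sub>m (Ai\<^sup>T * Ai))"
    using etas gram_mat_transpose i by (intro pd_smult_one_mat_minus_if_eigenvalues_less) auto
  from pd_saddle_mat[OF L Ai mu_pos this]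
  show "pd (saddle_mat (\<eta>i \<cdot>\<^sub>m 1\<^sub>m (dim_col Ai)) Ai (1 / \<mu>))" .
  then show "pd (\<eta>i \<cdot>\<^sub>m 1\<^sub>m (dim_col Ai))" by (rule pd_upper_left_if_pd_saddle_mat[OF L Ai])
qed

lemma pd_HKmat:
  assumes etas: "\<forall>i < length Xs. \<forall>e.
       eigenvalue (\<mu> \<cdot>\<^sub>m ((Ablocks n Xs ! i)\<^sup>T * (Ablocks n Xs ! i))) e \<longrightarrow> e < \<eta>s ! i"
  shows "pd (HKmat n Xs \<mu> \<eta>s)"
proof -
  let ?p = "pdim n Xs"
  let ?LGs = "map (\<lambda>(Ai, \<eta>i). (\<eta>i \<cdot>\<^sub>m 1\<^sub>m (dim_col Ai), Ai)) (zip (Ablocks n Xs) \<eta>s)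
    @ [(\<mu> \<cdot>\<^sub>m 1\<^sub>m ?p, - 1\<^sub>m ?p)]"
  note pd_block = pd_saddle_mat_Ablocks[OF etas]
  have "arrowhead_blocks ?p ?LGs"
    using dim_row_Ablocks unfolding arrowhead_blocks_def by (auto simp: set_zip intro: eq_matI)
  moreover have "\<forall>(L, G) \<in> set ?LGs. psd (saddle_mat L G (1 / \<mu>))"
    using pd_block(1) pd_imp_psd psd_saddle_mat_neg_one[OF mu_pos] by auto
  moreover have "\<forall>(L, G) \<in> set ?LGs. pd L"
    using pd_block(2) pd_smult_one_mat[OF mu_pos] by auto
  moreover have "?p = 0 \<or> (\<exists>(L, G) \<in> set ?LGs. pd (saddle_mat L G (1 / \<mu>)))"
  proof (cases Xs)
    case Nil
    then show ?thesis by (simp add: pdim_Nil)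
  next
    case Cons
    then have "(Ablocks n Xs ! 0, \<eta>s ! 0) \<in> set (zip (Ablocks n Xs) \<eta>s)"
      using len by (auto simp: in_set_zip)
    then show ?thesis using pd_block(1) by force
  qed
  ultimately show ?thesis unfolding HKmat_eq_arrowhead_mat by (rule pd_arrowhead_mat)
qed

end

end

theorem proposition1:
  fixes n :: nat and Xs :: "real mat list" and \<mu> \<eta> :: real and \<eta>s :: "real list"
  assumes rows: "\<forall>Xi \<in> set Xs. dim_row Xi = n"
    and mu_pos: "\<mu> > 0"
    and eta: "\<forall>e. eigenvalue (\<mu> \<cdot>\<^sub>m ((Amat n Xs)\<^sup>T * Amat n Xs)) e \<longrightarrow> e < \<eta>"
    and len: "length \<eta>s = length Xs"
    and etas: "\<forall>i < length Xs. \<forall>e.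
       eigenvalue (\<mu> \<cdot>\<^sub>m ((Ablocks n Xs ! i)\<^sup>T * (Ablocks n Xs ! i))) e \<longrightarrow> e < \<eta>s ! i"
  shows "psd (Mmat n Xs \<mu>) \<and> psd (MKmat n Xs \<mu>) \<and> pd (Hmat n Xs \<mu> \<eta>) \<and> pd (HKmat n Xs \<mu> \<eta>s)"
  using psd_Mmat[OF rows mu_pos] psd_MKmat[OF rows mu_pos] pd_Hmat[OF rows mu_pos eta]
    pd_HKmat[OF rows mu_pos len etas]
  by blast

end
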